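(* For all integers $n\ge1$ and $k\ge1$, the number of $k$-quasi-Stirling permutations of size $n$ is $$|\overline{\mathcal{Q}}^k_n|=\frac{(kn)!}{((k-1)n+1)!}=n!\,C_{n,k},\qquad\text{where } C_{n,k}=\frac{1}{(k-1)n+1}\binom{kn}{n}.$$
   Context: A $k$-quasi-Stirling permutation of size $n$ is a permutation $\pi$ of the multiset $\{1^k,2^k,\dots,n^k\}$ (each of $1,\dots,n$ appearing exactly $k$ times) that avoids the patterns $1212$ and $2121$, i.e. there are no indices $i<j<m<\ell$ with $\pi_i=\pi_m\neq\pi_j=\pi_\ell$. $\overline{\mathcal{Q}}^k_n$ denotes the set of these permutations. *)

theory Defs
  imports Complex_Main "HOL-Library.Multiset"
begin

definition avoids_1212_2121 :: "nat list \<Rightarrow> bool" where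
  "avoids_1212_2121 w \<longleftrightarrow>
     \<not> (\<exists>i j m l. i < j \<and> j < m \<and> m < l \<and> l < length w \<and>
           w ! i = w ! m \<and> w ! j = w ! l \<and> w ! i \<noteq> w ! j)"

definition multiset_perms :: "nat \<Rightarrow> nat \<Rightarrow> nat list set" where
  "multiset_perms k n = {w. mset w = (\<Sum>i\<in>{1..n}. replicate_mset k i)}"

definition quasi_stirling :: "nat \<Rightarrow> nat \<Rightarrow> nat list set" where
  "quasi_stirling k n = {w \<in> multiset_perms k n. avoids_1212_2121 w}"

definition C_nk :: "nat \<Rightarrow> nat \<Rightarrow> real" where
  "C_nk n k = (1 / real ((k - 1) * n + 1)) * real ((k * n) choose n)"

end

theory Submission
  imports Defs
begin

(* Let G(n, m) count the 1212/2121-avoiding words that start with a letter x, contain x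
   exactly m times and every letter of a set S (x \<notin> S, |S| = n) exactly k times.
   Look at the second letter of such a word with m + 1 copies of x.  If it is x, deleting
   the head leaves a word counted by G(n, m).  If it is some a \<in> S, avoidance of xaxa forces
   every a to precede every later x, so renaming all a to x gives a word for S - {a} with
   m + k copies of x; renaming the first k copies of x after the head back to a undoes this.
   Hence G(n, m + 1) = G(n, m) + n G(n - 1, m + k), which together with G(n, 0) = 0 and
   G(0, m + 1) = 1 is solved by G(n, m) = m (m + kn - 1)! / (m + (k - 1)n)!.  Prefixing a
   fresh letter 0 identifies the quasi-Stirling permutations of size n with the words
   counted by G(n, 1) for S = {1..n}. *)

definition abab_at :: "'a list \<Rightarrow> nat \<Rightarrow> nat \<Rightarrow> nat \<Rightarrow> nat \<Rightarrow> bool" where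
  "abab_at w i j p l \<longleftrightarrow> i < j \<and> j < p \<and> p < l \<and> l < length w \<and>
     w ! i = w ! p \<and> w ! j = w ! l \<and> w ! i \<noteq> w ! j"

lemma avoids_1212_2121_iff: "avoids_1212_2121 w \<longleftrightarrow> (\<forall>i j p l. \<not> abab_at w i j p l)"
  unfolding avoids_1212_2121_def abab_at_def by blast

lemma abab_at_Cons_Suc: "abab_at (y # v) (Suc i) (Suc j) (Suc p) (Suc l) \<longleftrightarrow> abab_at v i j p l"
  unfolding abab_at_def by auto

lemma abab_at_ConsE:
  assumes "abab_at (y # v) i j p l"
  obtains (tail) i' j' p' l' where "i = Suc i'" "j = Suc j'" "p = Suc p'" "l = Suc l'"
      "abab_at v i' j' p' l'"
    | (head) j' p' l' where "i = 0" "j = Suc j'" "p = Suc p'" "l = Suc l'"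
      "j' < p'" "p' < l'" "l' < length v" "v ! p' = y" "v ! j' = v ! l'" "v ! j' \<noteq> y"
proof -
  have "0 < j" "0 < p" "0 < l" using assms unfolding abab_at_def by auto
  then obtain j' p' l' where jpl: "j = Suc j'" "p = Suc p'" "l = Suc l'"
    by (auto simp: gr0_conv_Suc)
  show thesis
  proof (cases i)
    case 0
    then show thesis using head jpl assms unfolding abab_at_def by auto
  next
    case (Suc i')
    then show thesis using tail jpl assms abab_at_Cons_Suc by metis
  qed
qed

lemma avoids_1212_2121_ConsD: "avoids_1212_2121 (y # v) \<Longrightarrow> avoids_1212_2121 v"
  unfolding avoids_1212_2121_iff by (metis abab_at_Cons_Suc)

lemma avoids_1212_2121_Cons_fresh:
  assumes "y \<notin> set v"
  shows "avoids_1212_2121 (y # v) \<longleftrightarrow> avoids_1212_2121 v"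
proof
  assume av: "avoids_1212_2121 v"
  show "avoids_1212_2121 (y # v)" unfolding avoids_1212_2121_iff
  proof (intro allI notI)
    fix i j p l assume "abab_at (y # v) i j p l"
    then show False
    proof (cases rule: abab_at_ConsE)
      case (head j' p' l')
      then show False using assms nth_mem[of p' v] by simp
    qed (use av in \<open>auto simp: avoids_1212_2121_iff\<close>)
  qed
qed (rule avoids_1212_2121_ConsD)

lemma avoids_1212_2121_Cons_hd:
  assumes "v \<noteq> []"
  shows "avoids_1212_2121 (hd v # v) \<longleftrightarrow> avoids_1212_2121 v"
proof
  assume av: "avoids_1212_2121 v"
  show "avoids_1212_2121 (hd v # v)" unfolding avoids_1212_2121_iff
  proof (intro allI notI)
    fix i j p l assume "abab_at (hd v # v) i j p l"
    then show False
    proof (cases rule: abab_at_ConsE)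
      case (head j' p' l')
      have "v ! 0 = hd v" using assms by (simp add: hd_conv_nth)
      with head have "abab_at v 0 j' p' l'" unfolding abab_at_def by (auto intro: gr0I)
      then show False using av unfolding avoids_1212_2121_iff by blast
    qed (use av in \<open>auto simp: avoids_1212_2121_iff\<close>)
  qed
qed (rule avoids_1212_2121_ConsD)

definition all_before :: "'a \<Rightarrow> 'a \<Rightarrow> 'a list \<Rightarrow> bool" where
  "all_before a x t \<longleftrightarrow> (\<forall>i j. i < j \<longrightarrow> j < length t \<longrightarrow> t ! i = x \<longrightarrow> t ! j \<noteq> a)"

lemma all_before_Cons: "all_before a x (y # t) \<longleftrightarrow> (y = x \<longrightarrow> a \<notin> set t) \<and> all_before a x t"
  unfolding all_before_def
  by (auto simp: in_set_conv_nth nth_Cons split: nat.splits)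

lemma all_before_if_avoids:
  assumes "avoids_1212_2121 (x # t)" "t \<noteq> []" "hd t = a" "a \<noteq> x"
  shows "all_before a x t"
  unfolding all_before_def
proof (intro allI impI notI)
  fix i j assume ij: "i < j" "j < length t" "t ! i = x" "t ! j = a"
  have "t ! 0 = a" using assms(2,3) by (simp add: hd_conv_nth)
  with ij assms(4) have "abab_at (x # t) 0 1 (Suc i) (Suc j)"
    unfolding abab_at_def by (auto intro: gr0I)
  then show False using assms(1) unfolding avoids_1212_2121_iff by blast
qed

lemma avoids_merge_if_avoids:
  assumes "a \<noteq> x" "t \<noteq> []" "hd t = a" "all_before a x t" "avoids_1212_2121 (x # t)"
  shows "avoids_1212_2121 (map (\<lambda>z. if z = a then x else z) t)"
  unfolding avoids_1212_2121_iff
proof (intro allI notI)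
  let ?f = "\<lambda>z. if z = a then x else z"
  have t0: "t ! 0 = a" using assms(2,3) by (simp add: hd_conv_nth)
  have in_xt: False if "abab_at (x # t) i j p l" for i j p l
    using assms(5) that unfolding avoids_1212_2121_iff by blast
  have in_t: False if "abab_at t i j p l" for i j p l
    using in_xt[of "Suc i" "Suc j" "Suc p" "Suc l"] that by (simp add: abab_at_Cons_Suc)
  have order: "t ! q = x \<Longrightarrow> q < r \<Longrightarrow> r < length t \<Longrightarrow> t ! r \<noteq> a" for q r
    using assms(4) unfolding all_before_def by blast
  fix i j p l assume "abab_at (map ?f t) i j p l"
  then have pos: "i < j" "j < p" "p < l" "l < length t"
    and eqs: "?f (t ! i) = ?f (t ! p)" "?f (t ! j) = ?f (t ! l)" "?f (t ! i) \<noteq> ?f (t ! j)"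
    unfolding abab_at_def by auto
  (* A pair merged from a and x is repaired with the head x of x # t or the head a of t. *)
  consider (same) "t ! i = t ! p" "t ! j = t ! l" "t ! i \<noteq> t ! j"
    | (merged_ip) "t ! i = a" "t ! p = x" "t ! j = t ! l" "t ! j \<noteq> a" "t ! j \<noteq> x"
    | (merged_jl) "t ! j = a" "t ! l = x" "t ! i = t ! p" "t ! i \<noteq> a" "t ! i \<noteq> x"
  proof -
    have f_eq: "?f c = ?f d \<longleftrightarrow> c = d \<or> (c = a \<and> d = x) \<or> (c = x \<and> d = a)" for c d
      using assms(1) by auto
    have "t ! i = t ! p \<or> t ! i = a \<and> t ! p = x"
      using eqs(1) f_eq order[of i p] pos by auto
    moreover have "t ! j = t ! l \<or> t ! j = a \<and> t ! l = x"
      using eqs(2) f_eq order[of j l] pos by auto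
    moreover have "t ! i \<noteq> t ! j" using eqs(3) by metis
    moreover have "\<not> (t ! i \<in> {a, x} \<and> t ! j \<in> {a, x})" using eqs(3) by (auto split: if_splits)
    ultimately show thesis using that by auto
  qed
  then show False
  proof cases
    case same
    with pos show False by (intro in_t[of i j p l]) (simp add: abab_at_def)
  next
    case merged_ip
    with pos show False by (intro in_xt[of 0 "Suc j" "Suc p" "Suc l"]) (simp add: abab_at_def)
  next
    case merged_jl
    with pos t0 show False by (intro in_t[of 0 i j p]) (auto simp: abab_at_def intro: gr0I)
  qed
qed

lemma avoids_if_avoids_merge:
  assumes "a \<noteq> x" "t \<noteq> []" "hd t = a" "all_before a x t"
    "avoids_1212_2121 (map (\<lambda>z. if z = a then x else z) t)"
  shows "avoids_1212_2121 (x # t)"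
  unfolding avoids_1212_2121_iff
proof (intro allI notI)
  let ?f = "\<lambda>z. if z = a then x else z"
  have t0: "t ! 0 = a" using assms(2,3) by (simp add: hd_conv_nth)
  have in_merge: False if "abab_at (map ?f t) i j p l" for i j p l
    using assms(5) that unfolding avoids_1212_2121_iff by blast
  have order: "t ! q = x \<Longrightarrow> q < r \<Longrightarrow> r < length t \<Longrightarrow> t ! r \<noteq> a" for q r
    using assms(4) unfolding all_before_def by blast
  fix i j p l assume "abab_at (x # t) i j p l"
  then show False
  proof (cases rule: abab_at_ConsE)
    case (head j' p' l')
    then have "t ! l' \<noteq> a" using order[of p' l'] by blast
    moreover have "map ?f t ! 0 = x" using assms(2) t0 by simp
    ultimately have "abab_at (map ?f t) 0 j' p' l'"
      using head t0 assms(1) unfolding abab_at_def by (auto intro: gr0I)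
    then show False by (rule in_merge)
  next
    case (tail i' j' p' l')
    then have "?f (t ! i') \<noteq> ?f (t ! j')"
      using order[of i' j'] order[of j' p'] unfolding abab_at_def by auto
    with tail have "abab_at (map ?f t) i' j' p' l'" unfolding abab_at_def by auto
    then show False by (rule in_merge)
  qed
qed

fun replace_first :: "nat \<Rightarrow> 'a \<Rightarrow> 'a \<Rightarrow> 'a list \<Rightarrow> 'a list" where
  "replace_first 0 x a u = u"
| "replace_first (Suc c) x a [] = []"
| "replace_first (Suc c) x a (y # u) =
     (if y = x then a # replace_first c x a u else y # replace_first (Suc c) x a u)"

lemma replace_first_hd: "0 < c \<Longrightarrow> replace_first c x a (x # u) = a # replace_first (c - 1) x a u"
  by (cases c) auto

lemma map_merge_notin: "a \<notin> set t \<Longrightarrow> map (\<lambda>z. if z = a then x else z) t = t"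
  by (induction t) auto

lemma replace_first_merge:
  "all_before a x t \<Longrightarrow> count_list t a = c \<Longrightarrow>
     replace_first c x a (map (\<lambda>z. if z = a then x else z) t) = t"
proof (induction t arbitrary: c)
  case (Cons y t)
  show ?case
  proof (cases "y = a")
    case True
    with Cons show ?thesis by (auto simp: all_before_Cons)
  next
    case False
    show ?thesis
    proof (cases c)
      case 0
      with Cons.prems False have "a \<notin> set t" by (simp add: count_list_0_iff)
      with 0 False show ?thesis by (simp add: map_merge_notin)
    next
      case (Suc c')
      with Cons.prems(2) False have "count_list t a = Suc c'" by simp
      then have "a \<in> set t" using count_notin by fastforce
      with Cons.prems(1) have "y \<noteq> x" by (auto simp: all_before_Cons)
      with Cons False Suc show ?thesis by (simp add: all_before_Cons)
    qed
  qed
qed simp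

lemma merge_replace_first:
  "a \<notin> set u \<Longrightarrow> c \<le> count_list u x \<Longrightarrow>
     map (\<lambda>z. if z = a then x else z) (replace_first c x a u) = u"
proof (induction u arbitrary: c)
  case Nil
  then show ?case by simp
next
  case (Cons y u)
  then show ?case by (cases c) (auto simp: map_merge_notin)
qed

lemma count_list_replace_first:
  "c \<le> count_list u x \<Longrightarrow> a \<noteq> x \<Longrightarrow> count_list (replace_first c x a u) y =
     (if y = x then count_list u x - c else if y = a then count_list u a + c else count_list u y)"
proof (induction u arbitrary: c)
  case Nil
  then show ?case by simp
next
  case (Cons z u)
  then show ?case by (cases c) auto
qed

lemma count_list_merge:
  "a \<noteq> x \<Longrightarrow> count_list (map (\<lambda>z. if z = a then x else z) t) y =
     (if y = x then count_list t x + count_list t a else if y = a then 0 else count_list t y)"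
  by (induction t) auto

lemma all_before_if_notin: "a \<notin> set t \<Longrightarrow> all_before a x t"
  unfolding all_before_def by (auto dest: nth_mem)

lemma all_before_replace_first: "a \<notin> set u \<Longrightarrow> all_before a x (replace_first c x a u)"
proof (induction u arbitrary: c)
  case Nil
  then show ?case by (cases c) (simp_all add: all_before_if_notin)
next
  case (Cons y u)
  then show ?case by (cases c) (auto simp: all_before_Cons all_before_if_notin)
qed

definition headed_qs :: "nat \<Rightarrow> nat set \<Rightarrow> nat \<Rightarrow> nat \<Rightarrow> nat list set" where
  "headed_qs k S x m = {w. w \<noteq> [] \<and> hd w = x \<and>
     (\<forall>y. count_list w y = (if y = x then m else if y \<in> S then k else 0)) \<and>
     avoids_1212_2121 w}"

lemma set_headed_qs:
  assumes "w \<in> headed_qs k S x m"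
  shows "set w \<subseteq> insert x S"
proof
  fix y assume "y \<in> set w"
  then have "count_list w y \<noteq> 0" by (simp add: count_list_0_iff)
  with assms show "y \<in> insert x S" unfolding headed_qs_def by (auto split: if_splits)
qed

lemma length_headed_qs:
  assumes w: "w \<in> headed_qs k S x m" and "finite S" "x \<notin> S"
  shows "length w = m + k * card S"
proof -
  have cnt: "count_list w y = (if y = x then m else if y \<in> S then k else 0)" for y
    using w unfolding headed_qs_def by blast
  have "length w = (\<Sum>y\<in>insert x S. count_list w y)"
    using sum_count_set[OF set_headed_qs[OF w]] assms(2) by simp
  also have "\<dots> = m + (\<Sum>y\<in>S. count_list w y)"
    using assms(2,3) cnt by (simp add: sum.insert)
  also have "(\<Sum>y\<in>S. count_list w y) = (\<Sum>y\<in>S. k)"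
    using assms(3) cnt by (intro sum.cong) auto
  finally show ?thesis by simp
qed

lemma finite_headed_qs:
  assumes "finite S" "x \<notin> S"
  shows "finite (headed_qs k S x m)"
proof (rule finite_subset)
  show "headed_qs k S x m \<subseteq> {w. set w \<subseteq> insert x S \<and> length w = m + k * card S}"
    using set_headed_qs length_headed_qs assms by blast
  show "finite {w. set w \<subseteq> insert x S \<and> length w = m + k * card S}"
    using assms(1) by (simp add: finite_lists_length_eq)
qed

lemma headed_qs_0: "headed_qs k S x 0 = {}"
  unfolding headed_qs_def by (auto simp: neq_Nil_conv)

lemma headed_qs_empty: "headed_qs k {} x (Suc m) = {replicate (Suc m) x}"
proof (intro equalityI subsetI)
  fix w assume w: "w \<in> headed_qs k {} x (Suc m)"
  then have "length w = Suc m" using length_headed_qs by fastforce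
  moreover have "\<forall>y\<in>set w. y = x" using set_headed_qs[OF w] by auto
  ultimately show "w \<in> {replicate (Suc m) x}" using replicate_length_same by fastforce
next
  have "count_list (replicate n x) y = (if y = x then n else 0)" for n y
    by (induction n) auto
  then show "w \<in> headed_qs k {} x (Suc m)" if "w \<in> {replicate (Suc m) x}" for w
    using that unfolding headed_qs_def avoids_1212_2121_def by auto
qed

lemma headed_qs_ConsE:
  assumes w: "w \<in> headed_qs k S x m" and "S \<noteq> {}" "x \<notin> S" "0 < k"
  obtains b s where "w = x # b # s" "b \<in> insert x S"
proof -
  obtain a where a: "a \<in> S" using assms(2) by blast
  obtain t where t: "w = x # t" using w unfolding headed_qs_def by (cases w) auto
  have "count_list w a = k" using w a assms(3) unfolding headed_qs_def by auto
  then have "count_list t a = k" using t a assms(3) by auto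
  then have "a \<in> set t" using assms(4) count_notin by fastforce
  then obtain b s where "t = b # s" by (cases t) auto
  moreover have "b \<in> insert x S" using set_headed_qs[OF w] t calculation by auto
  ultimately show thesis using that t by blast
qed

lemma Cons_in_headed_qs_iff:
  "x # x # s \<in> headed_qs k S x (Suc m) \<longleftrightarrow> x # s \<in> headed_qs k S x m"
proof -
  have "count_list (x # x # s) y = (if y = x then Suc m else R y) \<longleftrightarrow>
      count_list (x # s) y = (if y = x then m else R y)" for y and R :: "nat \<Rightarrow> nat"
    by simp
  then show ?thesis
    using avoids_1212_2121_Cons_hd[of "x # s"] unfolding headed_qs_def by simp
qed

lemma merge_in_headed_qs:
  assumes w: "x # t \<in> headed_qs k S x (Suc m)" and t: "t \<noteq> []" "hd t = a"
    and a: "a \<in> S" "x \<notin> S"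
  shows "map (\<lambda>z. if z = a then x else z) t \<in> headed_qs k (S - {a}) x (m + k)"
    and "replace_first k x a (map (\<lambda>z. if z = a then x else z) t) = t"
proof -
  have ax: "a \<noteq> x" using a by auto
  have av: "avoids_1212_2121 (x # t)" using w unfolding headed_qs_def by blast
  have cnt: "count_list t y = (if y = x then m else if y \<in> S then k else 0)" for y
    using w unfolding headed_qs_def by (auto split: if_splits dest: spec[of _ y])
  have ord: "all_before a x t" using all_before_if_avoids[OF av t ax] .
  show "replace_first k x a (map (\<lambda>z. if z = a then x else z) t) = t"
    using replace_first_merge[OF ord] cnt[of a] a ax by simp
  have "map (\<lambda>z. if z = a then x else z) t \<noteq> []" "hd (map (\<lambda>z. if z = a then x else z) t) = x"
    using t by (auto simp: hd_map)
  then show "map (\<lambda>z. if z = a then x else z) t \<in> headed_qs k (S - {a}) x (m + k)"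
    unfolding headed_qs_def
    using avoids_merge_if_avoids[OF ax t ord av] count_list_merge[OF ax] cnt a ax by auto
qed

lemma replace_first_in_headed_qs:
  assumes u: "u \<in> headed_qs k (S - {a}) x (m + k)" and a: "a \<in> S" "x \<notin> S" and "0 < k"
  shows "x # replace_first k x a u \<in> headed_qs k S x (Suc m)"
proof -
  have ax: "a \<noteq> x" using a by auto
  have anu: "a \<notin> set u" using set_headed_qs[OF u] ax by auto
  have cnt: "count_list u y = (if y = x then m + k else if y \<in> S - {a} then k else 0)" for y
    using u unfolding headed_qs_def by blast
  have kx: "k \<le> count_list u x" using cnt[of x] by simp
  obtain u' where "u = x # u'" using u unfolding headed_qs_def by (cases u) auto
  then have t: "replace_first k x a u \<noteq> []" "hd (replace_first k x a u) = a"
    using replace_first_hd[OF \<open>0 < k\<close>, of x a u'] by auto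
  have ord: "all_before a x (replace_first k x a u)" using all_before_replace_first[OF anu] .
  have "map (\<lambda>z. if z = a then x else z) (replace_first k x a u) = u"
    using merge_replace_first[OF anu kx] .
  then have av: "avoids_1212_2121 (x # replace_first k x a u)"
    using avoids_if_avoids_merge[OF ax t ord] u unfolding headed_qs_def by auto
  have "count_list (x # replace_first k x a u) y = (if y = x then Suc m else if y \<in> S then k else 0)"
    for y using count_list_replace_first[OF kx ax, of y] cnt[of y] anu a ax kx by auto
  with av show ?thesis unfolding headed_qs_def by auto
qed

lemma headed_qs_Suc:
  assumes "S \<noteq> {}" "x \<notin> S" "0 < k"
  shows "headed_qs k S x (Suc m) = Cons x ` headed_qs k S x m \<union>
    (\<Union>a\<in>S. (\<lambda>u. x # replace_first k x a u) ` headed_qs k (S - {a}) x (m + k))"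
proof (intro equalityI subsetI)
  fix w assume w: "w \<in> headed_qs k S x (Suc m)"
  then obtain b s where ws: "w = x # b # s" "b \<in> insert x S"
    using headed_qs_ConsE assms by metis
  show "w \<in> Cons x ` headed_qs k S x m \<union>
    (\<Union>a\<in>S. (\<lambda>u. x # replace_first k x a u) ` headed_qs k (S - {a}) x (m + k))"
  proof (cases "b = x")
    case True
    then have "x # s \<in> headed_qs k S x m" using w ws Cons_in_headed_qs_iff by simp
    with ws True show ?thesis by blast
  next
    case False
    with ws have b: "b \<in> S" by simp
    have "w = x # replace_first k x b (map (\<lambda>z. if z = b then x else z) (b # s))"
      "map (\<lambda>z. if z = b then x else z) (b # s) \<in> headed_qs k (S - {b}) x (m + k)"
      using merge_in_headed_qs[of x "b # s" k S m b] w ws b assms(2) by simp_all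
    with b show ?thesis by blast
  qed
next
  fix w assume "w \<in> Cons x ` headed_qs k S x m \<union>
    (\<Union>a\<in>S. (\<lambda>u. x # replace_first k x a u) ` headed_qs k (S - {a}) x (m + k))"
  then show "w \<in> headed_qs k S x (Suc m)"
  proof (elim UnE imageE UN_E)
    fix v assume "v \<in> headed_qs k S x m" "w = x # v"
    moreover from this obtain s where "v = x # s"
      unfolding headed_qs_def by (cases v) auto
    ultimately show ?thesis using Cons_in_headed_qs_iff by simp
  next
    fix a u assume "a \<in> S" "u \<in> headed_qs k (S - {a}) x (m + k)"
      "w = x # replace_first k x a u"
    then show ?thesis using replace_first_in_headed_qs assms by simp
  qed
qed

lemma card_headed_qs_Suc:
  assumes "finite S" "S \<noteq> {}" "x \<notin> S" "0 < k"
  shows "card (headed_qs k S x (Suc m)) =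
    card (headed_qs k S x m) + (\<Sum>a\<in>S. card (headed_qs k (S - {a}) x (m + k)))"
proof -
  define F where "F a = (\<lambda>u. x # replace_first k x a u) ` headed_qs k (S - {a}) x (m + k)" for a
  have headed: "u \<in> headed_qs k S' x m' \<Longrightarrow> \<exists>u'. u = x # u'" for u S' m'
    unfolding headed_qs_def by (cases u) auto
  have second_x: "\<exists>s. w = x # x # s" if "w \<in> Cons x ` headed_qs k S x m" for w
    using that headed by blast
  have second_a: "\<exists>s. w = x # a # s" if w: "w \<in> F a" for a w
  proof -
    obtain u where "u \<in> headed_qs k (S - {a}) x (m + k)" "w = x # replace_first k x a u"
      using w unfolding F_def by blast
    moreover from this obtain u' where "u = x # u'" using headed by blast
    ultimately show ?thesis using replace_first_hd[OF assms(4), of x a u'] by simp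
  qed
  have card_F: "card (F a) = card (headed_qs k (S - {a}) x (m + k))" if "a \<in> S" for a
  proof -
    have inv: "map (\<lambda>z. if z = a then x else z) (replace_first k x a u) = u"
      if "u \<in> headed_qs k (S - {a}) x (m + k)" for u
    proof (rule merge_replace_first)
      show "a \<notin> set u" using set_headed_qs[OF that] \<open>a \<in> S\<close> assms(3) by auto
      show "k \<le> count_list u x" using that unfolding headed_qs_def by auto
    qed
    have "inj_on (\<lambda>u. x # replace_first k x a u) (headed_qs k (S - {a}) x (m + k))"
      by (rule inj_on_inverseI[where g = "\<lambda>w. map (\<lambda>z. if z = a then x else z) (tl w)"])
        (simp add: inv)
    then show ?thesis unfolding F_def by (rule card_image)
  qed
  have fin: "finite (headed_qs k S' x m')" if "S' \<subseteq> S" for S' m'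
    using finite_headed_qs finite_subset that assms(1,3) by blast
  have "card (headed_qs k S x (Suc m)) = card (Cons x ` headed_qs k S x m \<union> (\<Union>a\<in>S. F a))"
    using headed_qs_Suc[OF assms(2-4)] unfolding F_def by simp
  also have "\<dots> = card (headed_qs k S x m) + card (\<Union>a\<in>S. F a)"
  proof (subst card_Un_disjoint)
    have "w \<notin> F a" if "w \<in> Cons x ` headed_qs k S x m" "a \<in> S" for w a
      using second_x[of w] second_a[of w a] that assms(3) by auto
    then show "Cons x ` headed_qs k S x m \<inter> (\<Union>a\<in>S. F a) = {}" by blast
  qed (use fin assms(1) in \<open>auto simp: F_def card_image\<close>)
  also have "card (\<Union>a\<in>S. F a) = (\<Sum>a\<in>S. card (F a))"
  proof (rule card_UN_disjoint)
    have "w \<notin> F b" if "w \<in> F a" "a \<noteq> b" for w a b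
      using second_a[of w a] second_a[of w b] that by auto
    then show "\<forall>a\<in>S. \<forall>b\<in>S. a \<noteq> b \<longrightarrow> F a \<inter> F b = {}" by blast
  qed (use fin assms(1) in \<open>auto simp: F_def\<close>)
  finally show ?thesis using card_F by simp
qed

lemma fact_recurrence_step:
  fixes g s m n k A :: nat
  assumes A: "A = m + k * Suc n"
    and g: "g * fact A = m * fact (A + n)"
    and s: "s * fact (Suc A) = Suc n * ((m + Suc k) * fact (A + n))"
  shows "(g + s) * fact (Suc A) = Suc m * fact (Suc (A + n))"
proof -
  have "(g + s) * fact (Suc A) = (g * fact A) * Suc A + s * fact (Suc A)"
    by (simp add: algebra_simps)
  also have "\<dots> = (m * Suc A + Suc n * (m + Suc k)) * fact (A + n)"
    unfolding g s by (simp add: algebra_simps)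
  also have "m * Suc A + Suc n * (m + Suc k) = Suc m * Suc (A + n)"
    unfolding A by (simp add: algebra_simps)
  finally show ?thesis by (simp add: algebra_simps)
qed

lemma card_headed_qs:
  assumes "finite S" "x \<notin> S"
  shows "card (headed_qs (Suc k) S x m) * fact (m + k * card S) = m * fact (m + Suc k * card S - 1)"
  using assms
proof (induction "card S" arbitrary: S m)
  case 0
  then have "S = {}" by simp
  then show ?case by (cases m) (simp_all add: headed_qs_0 headed_qs_empty)
next
  case (Suc n)
  from Suc.prems have fin: "finite S" and x: "x \<notin> S" by simp_all
  have S: "card S = Suc n" "S \<noteq> {}" using Suc.hyps(2) by auto
  have removed: "card (headed_qs (Suc k) (S - {a}) x (m + Suc k)) * fact (Suc (m + k * Suc n))
      = (m + Suc k) * fact (m + k * Suc n + n)" if "a \<in> S" for a m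
  proof -
    have "card (S - {a}) = n" using S that fin by simp
    then show ?thesis
      using Suc.hyps(1)[of "S - {a}" "m + Suc k"] fin x by (simp add: algebra_simps)
  qed
  show ?case
  proof (induction m)
    case 0
    then show ?case by (simp add: headed_qs_0)
  next
    case (Suc m)
    define A where "A = m + k * Suc n"
    have "m + k * card S = A" and "m + Suc k * card S - 1 = A + n"
      using S(1) unfolding A_def by simp_all
    with Suc.IH have IH: "card (headed_qs (Suc k) S x m) * fact A = m * fact (A + n)" by simp
    have sum: "(\<Sum>a\<in>S. card (headed_qs (Suc k) (S - {a}) x (m + Suc k))) * fact (Suc A)
        = Suc n * ((m + Suc k) * fact (A + n))"
    proof -
      have "(\<Sum>a\<in>S. card (headed_qs (Suc k) (S - {a}) x (m + Suc k))) * fact (Suc A)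
          = (\<Sum>a\<in>S. card (headed_qs (Suc k) (S - {a}) x (m + Suc k)) * fact (Suc A))"
        by (simp add: sum_distrib_right)
      also have "\<dots> = (\<Sum>a\<in>S. (m + Suc k) * fact (A + n))"
        using removed unfolding A_def by (intro sum.cong) simp_all
      finally show ?thesis using S(1) by simp
    qed
    have "Suc m + k * card S = Suc A" and "Suc m + Suc k * card S - 1 = Suc (A + n)"
      using S(1) unfolding A_def by simp_all
    then show ?case
      unfolding card_headed_qs_Suc[OF fin S(2) x zero_less_Suc]
      using fact_recurrence_step[OF A_def IH sum] by (simp only:)
  qed
qed

lemma count_sum_replicate_mset:
  "finite A \<Longrightarrow> count (\<Sum>i\<in>A. replicate_mset k i) y = (if y \<in> A then k else 0)"
  by (simp add: count_sum sum.delta')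

lemma headed_qs_quasi_stirling: "headed_qs k {1..n} 0 1 = Cons 0 ` quasi_stirling k n"
proof -
  have counts: "(\<forall>y. count_list (0 # w) y = (if y = 0 then 1 else if y \<in> {1..n} then k else 0))
      \<longleftrightarrow> mset w = (\<Sum>i\<in>{1..n}. replicate_mset k i)" for w
  proof -
    have "count_list (0 # w) y = (if y = 0 then 1 else if y \<in> {1..n} then k else 0)
        \<longleftrightarrow> count (mset w) y = count (\<Sum>i\<in>{1..n}. replicate_mset k i) y" for y
      by (auto simp: count_mset count_sum_replicate_mset)
    then show ?thesis by (simp add: multiset_eq_iff)
  qed
  have Cons_iff: "0 # w \<in> headed_qs k {1..n} 0 1 \<longleftrightarrow> w \<in> quasi_stirling k n" for w
  proof -
    have fresh: "0 \<notin> set w" if "mset w = (\<Sum>i\<in>{1..n}. replicate_mset k i)"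
    proof -
      have "count (mset w) 0 = 0" using that by (simp add: count_sum_replicate_mset)
      then show ?thesis by simp
    qed
    have "0 # w \<in> headed_qs k {1..n} 0 1 \<longleftrightarrow>
        (\<forall>y. count_list (0 # w) y = (if y = 0 then 1 else if y \<in> {1..n} then k else 0)) \<and>
        avoids_1212_2121 (0 # w)"
      unfolding headed_qs_def by simp
    also have "\<dots> \<longleftrightarrow> mset w = (\<Sum>i\<in>{1..n}. replicate_mset k i) \<and> avoids_1212_2121 w"
      using counts[of w] fresh avoids_1212_2121_Cons_fresh[of 0 w] by blast
    finally show ?thesis unfolding quasi_stirling_def multiset_perms_def by simp
  qed
  show ?thesis
  proof (intro equalityI subsetI)
    fix w assume w: "w \<in> headed_qs k {1..n} 0 1"
    then have "w = 0 # tl w" unfolding headed_qs_def by (cases w) auto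
    with w Cons_iff[of "tl w"] show "w \<in> Cons 0 ` quasi_stirling k n" by (metis image_eqI)
  next
    fix w assume "w \<in> Cons 0 ` quasi_stirling k n"
    then show "w \<in> headed_qs k {1..n} 0 1" using Cons_iff by blast
  qed
qed

lemma fact_mult_C_nk: "fact n * C_nk n (Suc k) = fact (Suc k * n) / fact (k * n + 1)"
proof -
  have binom: "real (Suc k * n choose n) = fact (Suc k * n) / (fact n * fact (k * n))"
    using binomial_fact[of n "Suc k * n"] by simp
  have nonzero: "real (k * n + 1) \<noteq> 0"
    by (simp only: of_nat_eq_0_iff)
  have "fact n * C_nk n (Suc k) = fact (Suc k * n) / (real (k * n + 1) * fact (k * n))"
    unfolding C_nk_def binom using nonzero
    by (simp add: divide_simps del: of_nat_add of_nat_Suc)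
  also have "\<dots> = fact (Suc k * n) / fact (k * n + 1)"
    by (simp only: Suc_eq_plus1[symmetric] fact_Suc)
  finally show ?thesis .
qed

theorem theorem4p3:
  fixes n k :: nat
  assumes "n \<ge> 1" and "k \<ge> 1"
  shows "real (card (quasi_stirling k n)) = fact (k * n) / fact ((k - 1) * n + 1)
    \<and> real (card (quasi_stirling k n)) = fact n * C_nk n k"
proof -
  obtain k' where k: "k = Suc k'" using assms(2) by (cases k) auto
  have "card (quasi_stirling k n) = card (headed_qs k {1..n} 0 1)"
    unfolding headed_qs_quasi_stirling by (simp add: card_image)
  then have "card (quasi_stirling k n) * fact (k' * n + 1) = (fact (k * n) :: nat)"
    using card_headed_qs[of "{1..n}" 0 k' 1] k by (simp add: add.commute)
  then have "real (card (quasi_stirling k n)) * fact (k' * n + 1) = fact (k * n)"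
    by (metis of_nat_fact of_nat_mult)
  then have "real (card (quasi_stirling k n)) = fact (k * n) / fact (k' * n + 1)"
    by (rule eq_divide_imp[rotated]) (rule fact_nonzero)
  with fact_mult_C_nk[of n k'] k show ?thesis by simp
qed

end
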